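(* If $\gamma<1$, then for all $k\ge0$, $$\|\mathbf H^{k+1}-\mathbf W^\infty\mathbf H^{k+1}\|_F\le(1-\gamma(1-\sigma))\|\mathbf H^k-\mathbf W^\infty\mathbf H^k\|_F+4\gamma\|\mathbf E^k\|_F+2\gamma(1-\delta)\|\mathbf H^k-\tilde{\mathbf H}^k\|_F+L_2\|\mathbf x^{k+1}-\mathbf x^k\|.$$
   Context: $W\in\mathbb{R}^{n\times n}$ is entrywise nonnegative, symmetric, $W1_n=1_n$, with $w_{ij}=0$ iff $j$ is neither $i$ nor a neighbor of $i$ in an undirected connected graph; $\sigma=\|W-\frac1n1_n1_n^T\|$. Each $f_i:\mathbb{R}^d\to\mathbb{R}$ is $C^2$ with $L_1$-Lipschitz gradient and $L_2$-Lipschitz Hessian. $\mathcal Q:\mathbb{R}^{d\times d}\to\mathbb{R}^{d\times d}$ is deterministic with $\|\mathcal Q(A)-A\|_F\le(1-\delta)\|A\|_F$, $\delta\in(0,1]$, applied blockwise to $nd\times d$ matrices. Notation: $\mathbf x=[x_1;\dots;x_n]\in\mathbb{R}^{nd}$; $\mathbf W=W\otimes I_d$, $\mathbf W^\infty=\frac1n1_n1_n^T\otimes I_d$; $\nabla^2f(\mathbf x)=[\nabla^2f_1(x_1);\dots;\nabla^2f_n(x_n)]\in\mathbb{R}^{nd\times d}$. With $\gamma>0$, arbitrary points $\mathbf x^k\in\mathbb{R}^{nd}$, and arbitrary $\mathbf E^0,\tilde{\mathbf H}^0$, $H_i^0=\nabla^2f_i(x_i^0)$, the sequences satisfy for $k\ge0$: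 $\mathbf E^{k+1}=\mathbf E^k+\mathbf H^k-\tilde{\mathbf H}^k-\mathcal Q(\mathbf E^k+\mathbf H^k-\tilde{\mathbf H}^k)$; $\tilde{\mathbf H}^{k+1}=\tilde{\mathbf H}^k+\mathcal Q(\mathbf H^k-\tilde{\mathbf H}^k)$; $\hat{\mathbf H}^k=\tilde{\mathbf H}^k+\mathcal Q(\mathbf E^k+\mathbf H^k-\tilde{\mathbf H}^k)$; $\mathbf H^{k+1}=\mathbf H^k-\gamma(I_{nd}-\mathbf W)\hat{\mathbf H}^k+\nabla^2f(\mathbf x^{k+1})-\nabla^2f(\mathbf x^k)$. *)

theory Defs
  imports "HOL-Analysis.Analysis"
begin

text \<open>Stacked objects: an element of real^'d^'d^'n is an nd x d matrix made of n blocks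
  of size d x d (block i is X $ i).  The norm on real^'d^'d^'n is the Frobenius norm,
  the norm on real^'d^'n is the Euclidean norm of the stacked vector.\<close>

definition blk_mult :: "real^'n^'n \<Rightarrow> real^'d^'d^'n \<Rightarrow> real^'d^'d^'n" where
  "blk_mult W X = (\<chi> i. \<Sum>j\<in>UNIV. (W $ i $ j) *\<^sub>R (X $ j))"
  \<comment> \<open>(W \<otimes> I_d) X\<close>

definition avg_mat :: "real^'n^'n" where
  "avg_mat = (\<chi> i j. 1 / real CARD('n))"

definition blk_map :: "(real^'d^'d \<Rightarrow> real^'d^'d) \<Rightarrow> real^'d^'d^'n \<Rightarrow> real^'d^'d^'n" where
  "blk_map Q X = (\<chi> i. Q (X $ i))"

end

theory Submission
  imports Defs
begin

(* Since W is doubly stochastic, W^inf absorbs W from both sides, so the consensus error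
   P X = X - W^inf X of the step H' = H - gamma (I - W) Hhat + D, with R = Hhat - H, splits as
     P H' = (1 - gamma) P H + gamma (W - W^inf) P H - gamma (I - W) R + P D.
   On vectors W - W^inf has norm sigma, W is nonexpansive (Jensen on each row) and so is the
   orthogonal projection I - W^inf; these bounds lift to nd x d stacks column by column.
   Finally R = E + (Q Y - Y) with Y = E + H - Htilde, which gives
   ||R|| <= 2 ||E|| + (1 - delta) ||H - Htilde||, and ||D|| <= L2 ||x' - x|| blockwise. *)

lemma norm_vec_power2: "(norm v)\<^sup>2 = (\<Sum>i\<in>UNIV. (norm (v$i))\<^sup>2)"
  by (simp add: norm_vec_def L2_set_def sum_nonneg)

lemma norm_vec_le_scaled:
  fixes F :: "('a::real_normed_vector)^'n" and G :: "('b::real_normed_vector)^'n"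
  assumes "\<And>i. norm (F$i) \<le> c * norm (G$i)" "0 \<le> c"
  shows "norm F \<le> c * norm G"
proof -
  have "norm F = L2_set (\<lambda>i. norm (F$i)) UNIV" by (simp add: norm_vec_def)
  also have "\<dots> \<le> L2_set (\<lambda>i. c * norm (G$i)) UNIV"
    by (rule L2_set_mono) (use assms in auto)
  also have "\<dots> = c * norm G" by (simp add: norm_vec_def L2_set_right_distrib assms)
  finally show ?thesis .
qed

lemma norm_stacked_diff_le:
  fixes g :: "'n::finite \<Rightarrow> real^'d \<Rightarrow> 'a::real_normed_vector" and y z :: "real^'d^'n"
  assumes lip: "\<And>i a b. norm (g i a - g i b) \<le> L * norm (a - b)"
  shows "norm ((\<chi> i. g i (y$i)) - (\<chi> i. g i (z$i))) \<le> L * norm (y - z)"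
proof (rule norm_vec_le_scaled)
  have "norm (g undefined 1 - g undefined 0) \<le> L * norm (1 :: real^'d)"
    using lip[of undefined 1 0] by simp
  then have "0 \<le> L * norm (1 :: real^'d)"
    by (rule order_trans[OF norm_ge_zero])
  then show "0 \<le> L"
    by (simp add: zero_le_mult_iff)
qed (simp add: lip)

lemma norm_power2_as_column_sum:
  fixes Z :: "real^'c^'b^'a"
  shows "(norm Z)\<^sup>2 = (\<Sum>b\<in>UNIV. \<Sum>c\<in>UNIV. (norm (\<chi> a. Z$a$b$c))\<^sup>2)"
proof -
  have "(norm Z)\<^sup>2 = (\<Sum>a\<in>UNIV. \<Sum>b\<in>UNIV. \<Sum>c\<in>UNIV. (Z$a$b$c)\<^sup>2)"
    by (simp add: norm_vec_power2)
  also have "\<dots> = (\<Sum>b\<in>UNIV. \<Sum>c\<in>UNIV. \<Sum>a\<in>UNIV. (Z$a$b$c)\<^sup>2)"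
    by (subst sum.swap) (rule sum.cong[OF refl], rule sum.swap)
  finally show ?thesis
    by (simp add: norm_vec_power2)
qed

lemma blk_mult_column: "(\<chi> j. blk_mult M Z $ j $ a $ b) = M *v (\<chi> j. Z $ j $ a $ b)"
  by (simp add: vec_eq_iff blk_mult_def matrix_vector_mult_def)

lemma norm_blk_mult_le:
  fixes M :: "real^'n^'n" and Z :: "real^'d^'d^'n"
  assumes bound: "\<And>v. norm (M *v v) \<le> c * norm v" and "0 \<le> c"
  shows "norm (blk_mult M Z) \<le> c * norm Z"
proof (rule power2_le_imp_le)
  have "(norm (blk_mult M Z))\<^sup>2 = (\<Sum>a\<in>UNIV. \<Sum>b\<in>UNIV. (norm (M *v (\<chi> j. Z$j$a$b)))\<^sup>2)"
    by (simp add: norm_power2_as_column_sum blk_mult_column)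
  also have "\<dots> \<le> (\<Sum>a\<in>UNIV. \<Sum>b\<in>UNIV. (c * norm (\<chi> j. Z$j$a$b))\<^sup>2)"
    by (intro sum_mono power_mono bound) simp
  also have "\<dots> = (c * norm Z)\<^sup>2"
    by (simp add: norm_power2_as_column_sum power_mult_distrib sum_distrib_left)
  finally show "(norm (blk_mult M Z))\<^sup>2 \<le> (c * norm Z)\<^sup>2" .
qed (use assms in simp)

lemma blk_mult_add: "blk_mult M (X + Y) = blk_mult M X + blk_mult M Y"
  by (simp add: blk_mult_def vec_eq_iff scaleR_add_right sum.distrib)

lemma blk_mult_diff: "blk_mult M (X - Y) = blk_mult M X - blk_mult M Y"
  by (simp add: blk_mult_def vec_eq_iff scaleR_diff_right sum_subtractf)

lemma blk_mult_scaleR: "blk_mult M (c *\<^sub>R X) = c *\<^sub>R blk_mult M X"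
  by (simp add: blk_mult_def vec_eq_iff scaleR_sum_right ac_simps)

lemma blk_mult_diff_left: "blk_mult (A - B) X = blk_mult A X - blk_mult B X"
  by (simp add: blk_mult_def vec_eq_iff scaleR_diff_left sum_subtractf)

lemma blk_mult_assoc: "blk_mult A (blk_mult B X) = blk_mult (A ** B) X"
  unfolding blk_mult_def matrix_matrix_mult_def
  by (simp add: vec_eq_iff scaleR_sum_right scaleR_sum_left sum_component, subst sum.swap, simp)

lemma blk_mult_mat_1: "blk_mult (mat 1) X = X"
  by (simp add: blk_mult_def vec_eq_iff mat_def if_distrib[of "\<lambda>c. c *\<^sub>R _"] cong: if_cong)

lemma avg_mat_idem: "(avg_mat :: real^'n^'n) ** avg_mat = avg_mat"
  by (simp add: vec_eq_iff avg_mat_def matrix_matrix_mult_def)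

lemma avg_mat_mult_doubly_stochastic:
  fixes W :: "real^'n^'n"
  assumes rows: "\<And>i. (\<Sum>j\<in>UNIV. W $ i $ j) = 1" and cols: "\<And>j. (\<Sum>i\<in>UNIV. W $ i $ j) = 1"
  shows "avg_mat ** W = avg_mat" "W ** avg_mat = avg_mat"
  by (simp_all add: vec_eq_iff avg_mat_def matrix_matrix_mult_def rows cols
      flip: sum_divide_distrib)

lemma convex_combination_square_le:
  fixes w v :: "'n::finite \<Rightarrow> real"
  assumes "\<And>j. w j \<ge> 0" "(\<Sum>j\<in>UNIV. w j) = 1"
  shows "(\<Sum>j\<in>UNIV. w j * v j)\<^sup>2 \<le> (\<Sum>j\<in>UNIV. w j * (v j)\<^sup>2)"
proof -
  define s where "s = (\<Sum>j\<in>UNIV. w j * v j)"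
  have "0 \<le> (\<Sum>j\<in>UNIV. w j * (v j - s)\<^sup>2)" by (intro sum_nonneg) (simp add: assms)
  also have "\<dots> = (\<Sum>j\<in>UNIV. w j * (v j)\<^sup>2) - 2 * s * (\<Sum>j\<in>UNIV. w j * v j) + s\<^sup>2 * (\<Sum>j\<in>UNIV. w j)"
    by (simp add: power2_diff algebra_simps sum.distrib sum_subtractf sum_distrib_left sum_distrib_right)
  finally show ?thesis using assms(2) by (simp add: s_def power2_eq_square)
qed

lemma norm_doubly_stochastic_mult_le:
  fixes W :: "real^'n^'n"
  assumes nonneg: "\<And>i j. W $ i $ j \<ge> 0"
    and rows: "\<And>i. (\<Sum>j\<in>UNIV. W $ i $ j) = 1" and cols: "\<And>j. (\<Sum>i\<in>UNIV. W $ i $ j) = 1"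
  shows "norm (W *v v) \<le> norm v"
proof (rule power2_le_imp_le)
  have "(norm (W *v v))\<^sup>2 = (\<Sum>i\<in>UNIV. (\<Sum>j\<in>UNIV. W$i$j * v$j)\<^sup>2)"
    by (simp add: norm_vec_power2 matrix_vector_mult_def)
  also have "\<dots> \<le> (\<Sum>i\<in>UNIV. \<Sum>j\<in>UNIV. W$i$j * (v$j)\<^sup>2)"
    by (intro sum_mono convex_combination_square_le nonneg rows)
  also have "\<dots> = (\<Sum>j\<in>UNIV. (\<Sum>i\<in>UNIV. W$i$j) * (v$j)\<^sup>2)"
    by (subst sum.swap) (simp add: sum_distrib_right)
  also have "\<dots> = (norm v)\<^sup>2"
    by (simp add: cols norm_vec_power2)
  finally show "(norm (W *v v))\<^sup>2 \<le> (norm v)\<^sup>2" .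
qed simp

lemma norm_centering_le: "norm ((mat 1 - avg_mat) *v v) \<le> norm (v :: real^'n)"
proof (rule power2_le_imp_le)
  define m where "m = (\<Sum>j\<in>UNIV. v$j) / real CARD('n)"
  have "avg_mat *v v = (\<chi> i. m)"
    by (simp add: vec_eq_iff matrix_vector_mult_def avg_mat_def m_def sum_divide_distrib)
  then have centered: "((mat 1 - avg_mat) *v v) $ i = v$i - m" for i
    by (simp add: matrix_vector_mult_diff_rdistrib)
  have "(norm ((mat 1 - avg_mat) *v v))\<^sup>2 = (\<Sum>i\<in>UNIV. (v$i - m)\<^sup>2)"
    by (simp add: norm_vec_power2 centered)
  also have "\<dots> = (\<Sum>i\<in>UNIV. (v$i)\<^sup>2) - 2 * m * (\<Sum>j\<in>UNIV. v$j) + real CARD('n) * m\<^sup>2"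
    by (simp add: power2_diff sum.distrib sum_subtractf sum_distrib_left algebra_simps)
  also have "\<dots> = (\<Sum>i\<in>UNIV. (v$i)\<^sup>2) - real CARD('n) * m\<^sup>2"
    by (simp add: m_def power2_eq_square)
  also have "\<dots> \<le> (norm v)\<^sup>2"
    by (simp add: norm_vec_power2)
  finally show "(norm ((mat 1 - avg_mat) *v v))\<^sup>2 \<le> (norm v)\<^sup>2" .
qed simp

lemma norm_blk_map_diff_le:
  assumes "\<And>A. norm (Q A - A) \<le> (1 - \<delta>) * norm A" "\<delta> \<le> 1"
  shows "norm (blk_map Q Y - Y) \<le> (1 - \<delta>) * norm (Y :: real^'d^'d^'n)"
  by (rule norm_vec_le_scaled) (use assms in \<open>auto simp: blk_map_def\<close>)

lemma norm_error_feedback_diff_le: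
  assumes "\<And>A. norm (Q A - A) \<le> (1 - \<delta>) * norm A" "0 \<le> \<delta>" "\<delta> \<le> 1"
  shows "norm (Ht + blk_map Q (E + H - Ht) - H)
    \<le> 2 * norm E + (1 - \<delta>) * norm (H - Ht :: real^'d^'d^'n)"
proof -
  define Y where "Y = E + H - Ht"
  have "norm (Ht + blk_map Q Y - H) = norm ((blk_map Q Y - Y) + E)"
    by (simp add: Y_def algebra_simps)
  also have "\<dots> \<le> (1 - \<delta>) * norm Y + norm E"
    using norm_triangle_ineq[of "blk_map Q Y - Y" E] norm_blk_map_diff_le[OF assms(1,3), of Y]
    by linarith
  also have "\<dots> \<le> (1 - \<delta>) * (norm E + norm (H - Ht)) + norm E"
    using norm_triangle_ineq[of E "H - Ht"] assms(3)
    by (intro add_right_mono mult_left_mono) (simp_all add: Y_def add_diff_eq)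
  also have "\<dots> \<le> 2 * norm E + (1 - \<delta>) * norm (H - Ht)"
    using assms(2) by (simp add: algebra_simps)
  finally show ?thesis by (simp add: Y_def)
qed

definition consensus_err :: "real^'d^'d^'n \<Rightarrow> real^'d^'d^'n" where
  "consensus_err X = X - blk_mult avg_mat X"

lemma consensus_err_eq_blk_mult: "consensus_err X = blk_mult (mat 1 - avg_mat) X"
  by (simp add: consensus_err_def blk_mult_diff_left blk_mult_mat_1)

lemma consensus_err_gossip_step:
  fixes W :: "real^'n^'n" and H G D :: "real^'d^'d^'n"
  assumes "avg_mat ** W = avg_mat" "W ** avg_mat = avg_mat"
  shows "consensus_err (H - \<gamma> *\<^sub>R (G - blk_mult W G) + D)
    = (1 - \<gamma>) *\<^sub>R consensus_err H + \<gamma> *\<^sub>R blk_mult (W - avg_mat) (consensus_err H)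
      - \<gamma> *\<^sub>R ((G - H) - blk_mult W (G - H)) + consensus_err D"
proof -
  have "blk_mult avg_mat (blk_mult W X) = blk_mult avg_mat X"
    and "blk_mult W (blk_mult avg_mat X) = blk_mult avg_mat X"
    and "blk_mult avg_mat (blk_mult avg_mat X) = blk_mult avg_mat X" for X :: "real^'d^'d^'n"
    by (simp_all add: blk_mult_assoc assms avg_mat_idem)
  then show ?thesis
    by (simp add: consensus_err_def blk_mult_add blk_mult_diff blk_mult_scaleR blk_mult_diff_left
        algebra_simps)
qed

lemma norm_consensus_err_gossip_step_le:
  fixes W :: "real^'n^'n"
  assumes nonneg: "\<And>i j. W $ i $ j \<ge> 0"
    and rows: "\<And>i. (\<Sum>j\<in>UNIV. W $ i $ j) = 1" and cols: "\<And>j. (\<Sum>i\<in>UNIV. W $ i $ j) = 1"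
    and \<gamma>: "0 \<le> \<gamma>" "\<gamma> \<le> 1"
  defines "\<sigma> \<equiv> onorm (\<lambda>v. (W - avg_mat) *v v)"
  shows "norm (consensus_err (H - \<gamma> *\<^sub>R (G - blk_mult W G) + D))
    \<le> (1 - \<gamma> * (1 - \<sigma>)) * norm (consensus_err H) + 2 * \<gamma> * norm (G - H) + norm D"
proof -
  let ?P = "consensus_err H" and ?R = "G - H"
  have "0 \<le> \<sigma>"
    unfolding \<sigma>_def by (rule onorm_pos_le) simp
  then have mixing: "norm (blk_mult (W - avg_mat) ?P) \<le> \<sigma> * norm ?P"
    by (intro norm_blk_mult_le) (auto simp: \<sigma>_def intro: onorm)
  have "norm (blk_mult W ?R) \<le> 1 * norm ?R"
    by (rule norm_blk_mult_le) (simp_all add: norm_doubly_stochastic_mult_le[OF nonneg rows cols])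
  then have disagreement: "norm (?R - blk_mult W ?R) \<le> 2 * norm ?R"
    using norm_triangle_ineq4[of ?R "blk_mult W ?R"] by simp
  have drift: "norm (consensus_err D) \<le> 1 * norm D"
    unfolding consensus_err_eq_blk_mult by (rule norm_blk_mult_le) (simp_all add: norm_centering_le)
  have "consensus_err (H - \<gamma> *\<^sub>R (G - blk_mult W G) + D)
    = ((1 - \<gamma>) *\<^sub>R ?P + \<gamma> *\<^sub>R blk_mult (W - avg_mat) ?P) - \<gamma> *\<^sub>R (?R - blk_mult W ?R)
      + consensus_err D"
    using avg_mat_mult_doubly_stochastic[OF rows cols] by (simp add: consensus_err_gossip_step)
  also have "norm \<dots> \<le> norm ((1 - \<gamma>) *\<^sub>R ?P) + norm (\<gamma> *\<^sub>R blk_mult (W - avg_mat) ?P)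
      + norm (\<gamma> *\<^sub>R (?R - blk_mult W ?R)) + norm (consensus_err D)"
    by (intro norm_triangle_le norm_triangle_le_diff add_right_mono norm_triangle_ineq)
  also have "\<dots> = (1 - \<gamma>) * norm ?P + \<gamma> * norm (blk_mult (W - avg_mat) ?P)
      + \<gamma> * norm (?R - blk_mult W ?R) + norm (consensus_err D)"
    using \<gamma> by simp
  also have "\<dots> \<le> (1 - \<gamma>) * norm ?P + \<gamma> * (\<sigma> * norm ?P) + \<gamma> * (2 * norm ?R) + 1 * norm D"
    using \<gamma> mixing disagreement drift by (intro add_mono mult_left_mono) auto
  finally show ?thesis
    by (simp add: algebra_simps)
qed

theorem lemma8:
  fixes W :: "real^'n^'n"
    and Adj :: "'n \<Rightarrow> 'n \<Rightarrow> bool"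
    and f :: "'n \<Rightarrow> real^'d \<Rightarrow> real"
    and grad :: "'n \<Rightarrow> real^'d \<Rightarrow> real^'d"
    and hess :: "'n \<Rightarrow> real^'d \<Rightarrow> real^'d^'d"
    and L1 L2 \<gamma> \<delta> \<sigma> :: real
    and Q :: "real^'d^'d \<Rightarrow> real^'d^'d"
    and x :: "nat \<Rightarrow> real^'d^'n"
    and E Ht Hh H :: "nat \<Rightarrow> real^'d^'d^'n"
  assumes Adj_sym: "\<And>i j. Adj i j \<Longrightarrow> Adj j i"
    and Adj_irrefl: "\<And>i. \<not> Adj i i"
    and Adj_conn: "\<And>i j. Adj\<^sup>*\<^sup>* i j"
    and W_nonneg: "\<And>i j. W $ i $ j \<ge> 0"
    and W_sym: "transpose W = W"
    and W_stoch: "\<And>i. (\<Sum>j\<in>UNIV. W $ i $ j) = 1"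
    and W_pattern: "\<And>i j. W $ i $ j = 0 \<longleftrightarrow> (j \<noteq> i \<and> \<not> Adj i j)"
    and sigma_def: "\<sigma> = onorm (\<lambda>v. (W - avg_mat) *v v)"
    and f_grad: "\<And>i y. (f i has_derivative (\<lambda>h. grad i y \<bullet> h)) (at y)"
    and grad_hess: "\<And>i y. (grad i has_derivative (\<lambda>h. hess i y *v h)) (at y)"
    and hess_cont: "\<And>i. continuous_on UNIV (hess i)"
    and grad_lip: "\<And>i y z. norm (grad i y - grad i z) \<le> L1 * norm (y - z)"
    and hess_lip: "\<And>i y z. norm (hess i y - hess i z) \<le> L2 * norm (y - z)"
    and delta: "0 < \<delta>" "\<delta> \<le> 1"
    and Q_contr: "\<And>A. norm (Q A - A) \<le> (1 - \<delta>) * norm A"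
    and gamma_pos: "\<gamma> > 0"
    and H0: "H 0 = (\<chi> i. hess i (x 0 $ i))"
    and E_rec: "\<And>k. E (Suc k) = E k + H k - Ht k - blk_map Q (E k + H k - Ht k)"
    and Ht_rec: "\<And>k. Ht (Suc k) = Ht k + blk_map Q (H k - Ht k)"
    and Hh_def: "\<And>k. Hh k = Ht k + blk_map Q (E k + H k - Ht k)"
    and H_rec: "\<And>k. H (Suc k) = H k - \<gamma> *\<^sub>R (Hh k - blk_mult W (Hh k))
                 + (\<chi> i. hess i (x (Suc k) $ i)) - (\<chi> i. hess i (x k $ i))"
    and gamma_lt1: "\<gamma> < 1"
  shows "\<forall>k. norm (H (Suc k) - blk_mult avg_mat (H (Suc k)))
           \<le> (1 - \<gamma> * (1 - \<sigma>)) * norm (H k - blk_mult avg_mat (H k))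
             + 4 * \<gamma> * norm (E k) + 2 * \<gamma> * (1 - \<delta>) * norm (H k - Ht k)
             + L2 * norm (x (Suc k) - x k)"
proof
  fix k
  have W_cols: "(\<Sum>i\<in>UNIV. W $ i $ j) = 1" for j
  proof -
    have "W $ i $ j = W $ j $ i" for i
      by (metis W_sym transpose_def vec_lambda_beta)
    then show ?thesis
      using W_stoch[of j] by simp
  qed
  define D where "D = (\<chi> i. hess i (x (Suc k) $ i)) - (\<chi> i. hess i (x k $ i))"
  have H_step: "H (Suc k) = H k - \<gamma> *\<^sub>R (Hh k - blk_mult W (Hh k)) + D"
    by (simp add: H_rec D_def)
  have gossip: "norm (consensus_err (H (Suc k)))
    \<le> (1 - \<gamma> * (1 - \<sigma>)) * norm (consensus_err (H k)) + 2 * \<gamma> * norm (Hh k - H k) + norm D"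
    unfolding sigma_def H_step
    by (rule norm_consensus_err_gossip_step_le[OF W_nonneg W_stoch W_cols])
      (use gamma_pos gamma_lt1 in auto)
  have "norm (Hh k - H k) \<le> 2 * norm (E k) + (1 - \<delta>) * norm (H k - Ht k)"
    unfolding Hh_def by (rule norm_error_feedback_diff_le[OF Q_contr less_imp_le[OF delta(1)] delta(2)])
  then have compression: "2 * \<gamma> * norm (Hh k - H k)
    \<le> 4 * \<gamma> * norm (E k) + 2 * \<gamma> * (1 - \<delta>) * norm (H k - Ht k)"
    using mult_left_mono[OF _ less_imp_le[OF gamma_pos]] by (fastforce simp: algebra_simps)
  have "norm D \<le> L2 * norm (x (Suc k) - x k)"
    unfolding D_def by (rule norm_stacked_diff_le[OF hess_lip])
  with gossip compression show "norm (H (Suc k) - blk_mult avg_mat (H (Suc k)))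
           \<le> (1 - \<gamma> * (1 - \<sigma>)) * norm (H k - blk_mult avg_mat (H k))
             + 4 * \<gamma> * norm (E k) + 2 * \<gamma> * (1 - \<delta>) * norm (H k - Ht k)
             + L2 * norm (x (Suc k) - x k)"
    unfolding consensus_err_def by linarith
qed

end
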